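(* Let $M=(I,T)$ be a symbolic transition system with $T = A_1 \vee \dots \vee A_k$, and let $(V_L \cup V_A, E)$ be an inductive proof graph for $M$ that is valid. Suppose that $I \Rightarrow L$ holds for every $L \in V_L$. Then the conjunction $\bigwedge_{L \in V_L} L$ of all lemmas in $V_L$ is an inductive invariant of $M$, i.e. it satisfies $I \Rightarrow \bigwedge_{L\in V_L} L$ and $\left(\bigwedge_{L\in V_L} L\right) \wedge T \Rightarrow \left(\bigwedge_{L\in V_L} L\right)'$.
   Context: A symbolic transition system $M=(I,T)$ consists of a state predicate $I$ (initial states) over a finite set of state variables and a transition relation $T$, a predicate over current-state variables and primed next-state copies of them; for a state predicate $P$, $P'$ denotes $P$ with every state variable replaced by its primed version. The transition relation is a disjunction of actions, $T = A_1 \vee \dots \vee A_k$, each $A_i$ a predicate over current and next-state variables. A state predicate $Ind$ is an inductive invariant if $I \Rightarrow Ind$ and $Ind \wedge T \Rightarrow Ind'$ are valid. An inductive proof graph for $M$ is a directed graph $(V,E)$ with $V = V_L \cup V_A$, where $V_L$ (lemma nodes) is a set of state predicates over $M$, $V_A = V_L \times \{A_1,\dots,A_k\}$ (action nodes), and $E \subseteq V_L \times V_A$ (lemma support edges). For an action node $(L,A)$, its support set is $Supp_{(L,A)} = \{\ell \in V_L : (\ell,(L,A)) \in E\}$; the action node is locally valid if $\left(\bigwedge_{\ell \in Supp_{(L,A)}} \ell\right) \wedge L \wedge A \Rightarrow L'$ is valid. A lemma node $L$ is locally valid if all action nodes $(L,A_1),\dots,(L,A_k)$ are locally valid. The graph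 is valid if every lemma node in $V_L$ is locally valid. *)

theory Defs
  imports Main
begin

(* States are an abstract type 's (an assignment of values to the finite set of
   state variables).  A state predicate is 's \<Rightarrow> bool; an action / transition
   relation is a predicate over (current state, next state), so P' at the next
   state t is just P t. Validity of a formula means truth in all states. *)

type_synonym 's pred = "'s \<Rightarrow> bool"
type_synonym 's act = "'s \<Rightarrow> 's \<Rightarrow> bool"

definition trans_rel :: "nat \<Rightarrow> (nat \<Rightarrow> 's act) \<Rightarrow> 's act" where
  "trans_rel k A = (\<lambda>s t. \<exists>i<k. A i s t)"

definition inductive_invariant :: "'s pred \<Rightarrow> 's act \<Rightarrow> 's pred \<Rightarrow> bool" where
  "inductive_invariant I T Ind \<longleftrightarrow>
     (\<forall>s. I s \<longrightarrow> Ind s) \<and> (\<forall>s t. Ind s \<and> T s t \<longrightarrow> Ind t)"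

(* Inductive proof graph: lemma nodes VL, action nodes VL \<times> {0..<k} (action
   index i stands for A_i), edges E \<subseteq> VL \<times> (VL \<times> {0..<k}). *)
definition proof_graph :: "nat \<Rightarrow> 's pred set \<Rightarrow> ('s pred \<times> ('s pred \<times> nat)) set \<Rightarrow> bool" where
  "proof_graph k VL E \<longleftrightarrow> E \<subseteq> VL \<times> (VL \<times> {..<k})"

definition supp :: "'s pred set \<Rightarrow> ('s pred \<times> ('s pred \<times> nat)) set \<Rightarrow> 's pred \<Rightarrow> nat \<Rightarrow> 's pred set" where
  "supp VL E L i = {l \<in> VL. (l, (L, i)) \<in> E}"

definition action_node_valid ::
  "(nat \<Rightarrow> 's act) \<Rightarrow> 's pred set \<Rightarrow> ('s pred \<times> ('s pred \<times> nat)) set \<Rightarrow> 's pred \<Rightarrow> nat \<Rightarrow> bool" where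
  "action_node_valid A VL E L i \<longleftrightarrow>
     (\<forall>s t. (\<forall>l\<in>supp VL E L i. l s) \<and> L s \<and> A i s t \<longrightarrow> L t)"

definition lemma_node_valid ::
  "nat \<Rightarrow> (nat \<Rightarrow> 's act) \<Rightarrow> 's pred set \<Rightarrow> ('s pred \<times> ('s pred \<times> nat)) set \<Rightarrow> 's pred \<Rightarrow> bool" where
  "lemma_node_valid k A VL E L \<longleftrightarrow> (\<forall>i<k. action_node_valid A VL E L i)"

definition graph_valid ::
  "nat \<Rightarrow> (nat \<Rightarrow> 's act) \<Rightarrow> 's pred set \<Rightarrow> ('s pred \<times> ('s pred \<times> nat)) set \<Rightarrow> bool" where
  "graph_valid k A VL E \<longleftrightarrow> (\<forall>L\<in>VL. lemma_node_valid k A VL E L)"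

definition conj_all :: "'s pred set \<Rightarrow> 's pred" where
  "conj_all VL = (\<lambda>s. \<forall>L\<in>VL. L s)"

end

theory Submission
  imports Defs
begin

(* Every support lemma is itself a lemma node, so a state satisfying the conjunction of all
   lemmas satisfies every support set, and local validity of the action nodes carries each
   lemma across every action. *)

lemma supp_subset: "supp VL E L i \<subseteq> VL"
  by (auto simp: supp_def)

lemma action_node_valid_conj_all:
  assumes "action_node_valid A VL E L i" and "L s" and "conj_all VL s" and "A i s t"
  shows "L t"
proof -
  have "\<forall>l\<in>supp VL E L i. l s"
    using assms(3) supp_subset unfolding conj_all_def by blast
  with assms(1,2,4) show ?thesis
    unfolding action_node_valid_def by blast
qed

lemma graph_valid_conj_all_step:
  assumes valid: "graph_valid k A VL E" and pre: "conj_all VL s" and step: "trans_rel k A s t"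
  shows "conj_all VL t"
  unfolding conj_all_def
proof
  fix L assume "L \<in> VL"
  from step obtain i where "i < k" and "A i s t"
    unfolding trans_rel_def by blast
  with valid \<open>L \<in> VL\<close> have "action_node_valid A VL E L i"
    unfolding graph_valid_def lemma_node_valid_def by blast
  moreover from pre \<open>L \<in> VL\<close> have "L s"
    unfolding conj_all_def by blast
  ultimately show "L t"
    using pre \<open>A i s t\<close> by (rule action_node_valid_conj_all)
qed

theorem lemma4p5:
  fixes I :: "'s pred" and k :: nat and A :: "nat \<Rightarrow> 's act"
    and VL :: "'s pred set" and E :: "('s pred \<times> ('s pred \<times> nat)) set"
  assumes "proof_graph k VL E"
    and "graph_valid k A VL E"
    and "\<forall>L\<in>VL. \<forall>s. I s \<longrightarrow> L s"
  shows "inductive_invariant I (trans_rel k A) (conj_all VL)"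
  unfolding inductive_invariant_def
proof (intro conjI allI impI)
  fix s assume "I s"
  with assms(3) show "conj_all VL s"
    unfolding conj_all_def by blast
next
  fix s t assume "conj_all VL s \<and> trans_rel k A s t"
  with assms(2) show "conj_all VL t"
    by (blast intro: graph_valid_conj_all_step)
qed

end
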